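(* For any $0\le\lambda<n$ and $1\le p<\infty$, $V^{(\ast)}_{0,\infty}L^{p,\lambda}\subset\mathbb{L}^{p,\lambda}$.
   Context: $B(x,r)$ is the open ball in $\mathbb{R}^n$ with center $x$ and radius $r$. For $f\in L^1_{\mathrm{loc}}(\mathbb{R}^n)$ let $\mathfrak{M}_{p,\lambda}(f;x,r):=r^{-\lambda}\int_{B(x,r)}|f(y)|^p\,dy$. The homogeneous Morrey space $L^{p,\lambda}(\mathbb{R}^n)$ consists of $f\in L^p_{\mathrm{loc}}(\mathbb{R}^n)$ with $\|f\|_{p,\lambda}:=\sup_{x\in\mathbb{R}^n,\,r>0}\mathfrak{M}_{p,\lambda}(f;x,r)^{1/p}<\infty$. Subsets of $L^{p,\lambda}$: $V_0L^{p,\lambda}=\{f:\lim_{r\to0}\sup_{x}\mathfrak{M}_{p,\lambda}(f;x,r)=0\}$; $V_\infty L^{p,\lambda}=\{f:\lim_{r\to\infty}\sup_{x}\mathfrak{M}_{p,\lambda}(f;x,r)=0\}$; $V^{(\ast)}L^{p,\lambda}=\{f:\lim_{N\to\infty}\sup_{x}\int_{B(x,1)}|f(y)|^p\chi_{\mathbb{R}^n\setminus B(0,N)}(y)\,dy=0\}$; $V^{(\ast)}_{0,\infty}L^{p,\lambda}:=V_0L^{p,\lambda}\cap V_\infty L^{p,\lambda}\cap V^{(\ast)}L^{p,\lambda}$. The Zorko subspace is $\mathbb{L}^{p,\lambda}:=\{f\in L^{p,\lambda}(\mathbb{R}^n):\|f(\cdot-\xi)-f\|_{p,\lambda}\to0\text{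 as }\xi\to0\}$. *)

theory Defs
  imports "HOL-Analysis.Analysis"
begin

text \<open>Functions on R^n are modelled as functions on a Euclidean space type 'a,
  with n = DIM('a). Integrals are Lebesgue integrals (nonnegative integrals in ennreal).\<close>

definition morrey_M :: "real \<Rightarrow> real \<Rightarrow> ('a::euclidean_space \<Rightarrow> real) \<Rightarrow> 'a \<Rightarrow> real \<Rightarrow> ennreal" where
  "morrey_M p lam f x r =
     ennreal (r powr (- lam)) * (\<integral>\<^sup>+ y \<in> ball x r. ennreal (\<bar>f y\<bar> powr p) \<partial>lebesgue)"

definition morrey_normp :: "real \<Rightarrow> real \<Rightarrow> ('a::euclidean_space \<Rightarrow> real) \<Rightarrow> ennreal" where
  "morrey_normp p lam f = (SUP x\<in>UNIV. SUP r\<in>{0<..}. morrey_M p lam f x r)"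

definition morrey_space :: "real \<Rightarrow> real \<Rightarrow> ('a::euclidean_space \<Rightarrow> real) set" where
  "morrey_space p lam =
     {f. f \<in> borel_measurable lebesgue \<and>
         (\<forall>K. compact K \<longrightarrow> (\<integral>\<^sup>+ y \<in> K. ennreal (\<bar>f y\<bar> powr p) \<partial>lebesgue) < \<infinity>) \<and>
         morrey_normp p lam f < \<infinity>}"

definition V0_morrey :: "real \<Rightarrow> real \<Rightarrow> ('a::euclidean_space \<Rightarrow> real) set" where
  "V0_morrey p lam = {f \<in> morrey_space p lam.
      ((\<lambda>r. SUP x\<in>UNIV. morrey_M p lam f x r) \<longlongrightarrow> 0) (at_right 0)}"

definition Vinf_morrey :: "real \<Rightarrow> real \<Rightarrow> ('a::euclidean_space \<Rightarrow> real) set" where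
  "Vinf_morrey p lam = {f \<in> morrey_space p lam.
      ((\<lambda>r. SUP x\<in>UNIV. morrey_M p lam f x r) \<longlongrightarrow> 0) at_top}"

definition Vstar_morrey :: "real \<Rightarrow> real \<Rightarrow> ('a::euclidean_space \<Rightarrow> real) set" where
  "Vstar_morrey p lam = {f \<in> morrey_space p lam.
      ((\<lambda>N::real. SUP x\<in>UNIV. (\<integral>\<^sup>+ y \<in> ball x 1.
          ennreal (\<bar>f y\<bar> powr p) * indicator (UNIV - ball 0 N) y \<partial>lebesgue)) \<longlongrightarrow> 0) at_top}"

definition V0inf_star_morrey :: "real \<Rightarrow> real \<Rightarrow> ('a::euclidean_space \<Rightarrow> real) set" where
  "V0inf_star_morrey p lam = V0_morrey p lam \<inter> Vinf_morrey p lam \<inter> Vstar_morrey p lam"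

text \<open>Zorko subspace: the Morrey norm of f(.-xi) - f tends to 0 as xi tends to 0
  (stated via the p-th power of the norm, which is equivalent).\<close>
definition zorko_morrey :: "real \<Rightarrow> real \<Rightarrow> ('a::euclidean_space \<Rightarrow> real) set" where
  "zorko_morrey p lam = {f \<in> morrey_space p lam.
      ((\<lambda>\<xi>. morrey_normp p lam (\<lambda>y. f (y - \<xi>) - f y)) \<longlongrightarrow> 0) (at 0)}"

end

theory Submission
  imports Defs
begin

text \<open>Write \<Delta>f = f(. - \<xi>) - f. For radii r < \<delta> and r \<ge> R the Morrey functional of \<Delta>f
  is bounded, uniformly in \<xi>, by 2^p times the moduli occurring in the definitions of V_0 and
  V_\<infinity>. For \<delta> \<le> r < R the factor r^(-\<lambda>) is at most \<delta>^(-\<lambda>), and B(x,R) is covered by a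
  fixed finite number of unit balls. So outside a large ball B(0,N) the integral of |\<Delta>f|^p is
  controlled by the tail condition defining V^(*), while inside B(0,N) the function f agrees with a
  truncation g in L^p, and the L^p norm of g(. - \<xi>) - g tends to 0 by the continuity of
  translation in L^p.\<close>

lemma abs_add_powr_le:
  fixes a b p :: real
  assumes "p > 0"
  shows "\<bar>a + b\<bar> powr p \<le> 2 powr p * (\<bar>a\<bar> powr p + \<bar>b\<bar> powr p)"
proof -
  have "\<bar>a + b\<bar> powr p \<le> (2 * max \<bar>a\<bar> \<bar>b\<bar>) powr p"
    using assms by (intro powr_mono2) auto
  also have "\<dots> = 2 powr p * max \<bar>a\<bar> \<bar>b\<bar> powr p"
    by (simp add: powr_mult)
  also have "max \<bar>a\<bar> \<bar>b\<bar> powr p \<le> \<bar>a\<bar> powr p + \<bar>b\<bar> powr p"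
    by (simp add: max_def)
  finally show ?thesis
    by (simp add: mult_left_mono)
qed

lemma abs_add3_powr_le:
  fixes a b c p :: real
  assumes "p > 0"
  shows "\<bar>a + b + c\<bar> powr p \<le> 4 powr p * (\<bar>a\<bar> powr p + \<bar>b\<bar> powr p + \<bar>c\<bar> powr p)"
proof -
  have "\<bar>a + b + c\<bar> powr p \<le> (4 * max \<bar>a\<bar> (max \<bar>b\<bar> \<bar>c\<bar>)) powr p"
    using assms by (intro powr_mono2) auto
  also have "\<dots> = 4 powr p * max \<bar>a\<bar> (max \<bar>b\<bar> \<bar>c\<bar>) powr p"
    by (simp add: powr_mult)
  also have "max \<bar>a\<bar> (max \<bar>b\<bar> \<bar>c\<bar>) powr p \<le> \<bar>a\<bar> powr p + \<bar>b\<bar> powr p + \<bar>c\<bar> powr p"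
    by (simp add: max_def)
  finally show ?thesis
    by (simp add: mult_left_mono)
qed

lemma ennreal_tendsto_zeroI:
  fixes c :: real
  assumes "c > 0" and "\<And>e. e > 0 \<Longrightarrow> eventually (\<lambda>x. X x \<le> ennreal (c * e)) F"
  shows "(X \<longlongrightarrow> (0::ennreal)) F"
proof (rule order_tendstoI)
  fix a :: ennreal
  assume "0 < a"
  then obtain e where e: "e > 0" "ennreal (c * e) < a"
  proof (cases a rule: ennreal_cases)
    case (real r)
    with \<open>0 < a\<close> \<open>c > 0\<close> show ?thesis
      using that[of "r / (2 * c)"] by (auto simp: ennreal_less_iff)
  qed (use that[of 1] in simp)
  show "eventually (\<lambda>x. X x < a) F"
    using assms(2)[OF e(1)] by eventually_elim (use e(2) in auto)
qed simp

lemma eventually_at_zero_norm_less: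
  fixes d :: real
  assumes "d > 0"
  shows "eventually (\<lambda>\<xi>::'a::real_normed_vector. norm \<xi> < d) (at 0)"
  using eventually_at_ball[OF assms, of "0::'a" UNIV] by (rule eventually_mono) simp

section \<open>Translation invariance of Lebesgue measure\<close>

lemma lebesgue_translation:
  fixes a :: "'a::euclidean_space"
  shows lebesgue_eq_distr_translation: "lebesgue = distr lebesgue lebesgue (\<lambda>x. a + x)"
    and measurable_translation_lebesgue: "(\<lambda>x. a + x) \<in> lebesgue \<rightarrow>\<^sub>M lebesgue"
proof -
  have T: "(\<lambda>x. a + (\<Sum>j\<in>Basis. (1 * (x \<bullet> j)) *\<^sub>R j)) = (\<lambda>x. a + x)"
    by (simp add: euclidean_representation)
  have "lebesgue = density (distr lebesgue lebesgue (\<lambda>x. a + x)) (\<lambda>_. \<Prod>j\<in>Basis. \<bar>1::real\<bar>)"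
    using lebesgue_affine_euclidean[of "\<lambda>_. 1" a] T by simp
  then show "lebesgue = distr lebesgue lebesgue (\<lambda>x. a + x)"
    by (simp add: density_1)
  show "(\<lambda>x. a + x) \<in> lebesgue \<rightarrow>\<^sub>M lebesgue"
    using lebesgue_affine_measurable[of "\<lambda>_. 1" a] T by simp
qed

lemma measurable_translation_subtract_lebesgue[measurable]:
  fixes a :: "'a::euclidean_space"
  shows "(\<lambda>x. x - a) \<in> lebesgue \<rightarrow>\<^sub>M lebesgue"
  using measurable_translation_lebesgue[of "- a"] by simp

lemma sets_lebesgue_ball[measurable]: "ball (x::'a::euclidean_space) r \<in> sets lebesgue"
  by simp

lemma nn_integral_translation_subtract:
  fixes a :: "'a::euclidean_space"
  assumes [measurable]: "h \<in> borel_measurable lebesgue"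
  shows "(\<integral>\<^sup>+ y. h (y - a) \<partial>lebesgue) = (\<integral>\<^sup>+ y. h y \<partial>lebesgue)"
proof -
  have "(\<integral>\<^sup>+ y. h y \<partial>lebesgue) = (\<integral>\<^sup>+ y. h y \<partial>distr lebesgue lebesgue (\<lambda>x. - a + x))"
    using lebesgue_eq_distr_translation[of "- a"] by simp
  also have "\<dots> = (\<integral>\<^sup>+ y. h (y - a) \<partial>lebesgue)"
    by (subst nn_integral_distr) (auto intro: measurable_translation_lebesgue)
  finally show ?thesis ..
qed

lemma nn_integral_ball_translation_subtract:
  fixes a :: "'a::euclidean_space"
  assumes [measurable]: "h \<in> borel_measurable lebesgue"
  shows "(\<integral>\<^sup>+ y \<in> ball x r. h (y - a) \<partial>lebesgue) = (\<integral>\<^sup>+ y \<in> ball (x - a) r. h y \<partial>lebesgue)"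
proof -
  have "indicator (ball x r) y = (indicator (ball (x - a) r) (y - a) :: ennreal)" for y
    by (simp add: indicator_def dist_norm algebra_simps)
  then have "(\<integral>\<^sup>+ y \<in> ball x r. h (y - a) \<partial>lebesgue)
      = (\<integral>\<^sup>+ y. (\<lambda>z. h z * indicator (ball (x - a) r) z) (y - a) \<partial>lebesgue)"
    by simp
  also have "\<dots> = (\<integral>\<^sup>+ y \<in> ball (x - a) r. h y \<partial>lebesgue)"
    by (rule nn_integral_translation_subtract) measurable
  finally show ?thesis .
qed

lemma emeasure_translation_subtract:
  fixes a :: "'a::euclidean_space"
  assumes S: "S \<in> sets lebesgue"
  shows "{y. y - a \<in> S} \<in> sets lebesgue"
    and "emeasure lebesgue {y. y - a \<in> S} = emeasure lebesgue S"
proof -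
  have eq: "indicator {y. y - a \<in> S} = (\<lambda>y. indicator S (y - a) :: ennreal)"
    by (auto simp: indicator_def)
  show meas: "{y. y - a \<in> S} \<in> sets lebesgue"
    using measurable_sets[OF measurable_translation_subtract_lebesgue S, of a] by (simp add: vimage_def)
  have "emeasure lebesgue {y. y - a \<in> S} = (\<integral>\<^sup>+ y. indicator S (y - a) \<partial>lebesgue)"
    using meas by (simp flip: eq)
  also have "\<dots> = emeasure lebesgue S"
    using S by (subst nn_integral_translation_subtract) auto
  finally show "emeasure lebesgue {y. y - a \<in> S} = emeasure lebesgue S" .
qed

section \<open>Continuity of translation in L^p\<close>

lemma lmeasurable_inner_compact:
  fixes S :: "'a::euclidean_space set"
  assumes S: "S \<in> lmeasurable" and e: "e > 0"
  obtains K where "compact K" "K \<subseteq> S" "emeasure lebesgue (S - K) < ennreal e"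
proof -
  have S_sets: "S \<in> sets lebesgue"
    using S by (rule fmeasurableD)
  have "e / 2 > 0"
    using e by simp
  then obtain T where T: "closed T" "T \<subseteq> S" "emeasure lebesgue (S - T) < ennreal (e / 2)"
    by (rule sets_lebesgue_inner_closed[OF S_sets])
  have lim: "(\<lambda>n. emeasure lebesgue (S - cball 0 (real n))) \<longlonglongrightarrow> emeasure lebesgue (\<Inter>n. S - cball 0 (real n))"
  proof (rule Lim_emeasure_decseq)
    show "range (\<lambda>n. S - cball 0 (real n)) \<subseteq> sets lebesgue"
      using S_sets by auto
    show "decseq (\<lambda>n. S - cball 0 (real n))"
      by (auto simp: decseq_def)
    show "emeasure lebesgue (S - cball 0 (real n)) \<noteq> \<infinity>" for n
      using S emeasure_mono[of "S - cball 0 (real n)" S lebesgue] S_sets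
      by (auto simp: fmeasurable_def top_unique)
  qed
  have empty: "(\<Inter>n. S - cball 0 (real n)) = ({} :: 'a set)"
  proof -
    have "x \<notin> (\<Inter>n. S - cball 0 (real n))" for x :: 'a
    proof -
      obtain n where "norm x \<le> real n"
        using real_arch_simple by blast
      then show ?thesis
        by auto
    qed
    then show ?thesis
      by blast
  qed
  have "eventually (\<lambda>n. emeasure lebesgue (S - cball 0 (real n)) < ennreal (e / 2)) sequentially"
    using lim e unfolding empty by (intro order_tendstoD(2)) auto
  then obtain n where n: "emeasure lebesgue (S - cball 0 (real n)) < ennreal (e / 2)"
    by (auto simp: eventually_sequentially)
  show thesis
  proof
    show "compact (T \<inter> cball 0 (real n))"
      using T(1) by (rule closed_Int_compact) simp
    show "T \<inter> cball 0 (real n) \<subseteq> S"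
      using T(2) by blast
    have "S - T \<inter> cball 0 (real n) = (S - T) \<union> (S - cball 0 (real n))"
      by blast
    then have "emeasure lebesgue (S - T \<inter> cball 0 (real n))
        \<le> emeasure lebesgue (S - T) + emeasure lebesgue (S - cball 0 (real n))"
      using S_sets T(1) by (simp only:) (intro emeasure_subadditive; auto)
    also have "\<dots> < ennreal (e / 2 + e / 2)"
      using T(3) n by (rule add_mono_ennreal)
    finally show "emeasure lebesgue (S - T \<inter> cball 0 (real n)) < ennreal e"
      by simp
  qed
qed

lemma emeasure_translation_symdiff_tendsto:
  fixes A :: "'a::euclidean_space set"
  assumes A: "A \<in> lmeasurable"
  shows "((\<lambda>\<xi>. emeasure lebesgue {y. (y - \<xi> \<in> A) \<noteq> (y \<in> A)}) \<longlongrightarrow> 0) (at 0)"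
proof (rule ennreal_tendsto_zeroI[of 1])
  fix e :: real
  assume "e > 0"
  then have e4: "e / 4 > 0"
    by simp
  have A_sets: "A \<in> sets lebesgue"
    using A by (rule fmeasurableD)
  obtain U where U: "open U" "A \<subseteq> U" "emeasure lebesgue (U - A) < ennreal (e / 4)"
    using sets_lebesgue_outer_open[OF A_sets e4] by blast
  obtain K where K: "compact K" "K \<subseteq> A" "emeasure lebesgue (A - K) < ennreal (e / 4)"
    using lmeasurable_inner_compact[OF A e4] by blast
  define D where "D = U - K"
  have D_sets: "D \<in> sets lebesgue"
    using U(1) K(1) by (simp add: D_def compact_imp_closed sets.Diff)
  have "D = (U - A) \<union> (A - K)"
    using U(2) K(2) by (auto simp: D_def)
  then have "emeasure lebesgue D \<le> emeasure lebesgue (U - A) + emeasure lebesgue (A - K)"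
    using A_sets U(1) K(1) by (simp only:) (intro emeasure_subadditive; auto simp: compact_imp_closed)
  also have "\<dots> < ennreal (e / 4 + e / 4)"
    using U(3) K(3) by (rule add_mono_ennreal)
  finally have D_small: "emeasure lebesgue D < ennreal (e / 2)"
    by simp
  obtain d where d: "d > 0" "\<And>x y. x \<in> K \<Longrightarrow> y \<notin> U \<Longrightarrow> d \<le> dist x y"
  proof -
    have "K \<inter> - U = {}"
      using K(2) U(2) by blast
    then show thesis
      using separate_compact_closed[of K "- U"] K(1) U(1) that by fastforce
  qed
  show "eventually (\<lambda>\<xi>. emeasure lebesgue {y. (y - \<xi> \<in> A) \<noteq> (y \<in> A)} \<le> ennreal (1 * e)) (at 0)"
    using eventually_at_zero_norm_less[OF d(1)]
  proof eventually_elim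
    case (elim \<xi>)
    have "y \<in> U" if "y - \<xi> \<in> K" for y
      using d(2)[OF that, of y] elim by (auto simp: dist_norm)
    moreover have "y - \<xi> \<in> U" if "y \<in> K" for y
      using d(2)[OF that, of "y - \<xi>"] elim by (auto simp: dist_norm)
    ultimately have "{y. (y - \<xi> \<in> A) \<noteq> (y \<in> A)} \<subseteq> D \<union> {y. y - \<xi> \<in> D}"
      using U(2) K(2) by (auto simp: D_def)
    then have "emeasure lebesgue {y. (y - \<xi> \<in> A) \<noteq> (y \<in> A)} \<le> emeasure lebesgue (D \<union> {y. y - \<xi> \<in> D})"
      using D_sets emeasure_translation_subtract(1)[OF D_sets] by (intro emeasure_mono) auto
    also have "\<dots> \<le> emeasure lebesgue D + emeasure lebesgue {y. y - \<xi> \<in> D}"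
      using D_sets emeasure_translation_subtract(1)[OF D_sets] by (intro emeasure_subadditive)
    also have "\<dots> = emeasure lebesgue D + emeasure lebesgue D"
      using emeasure_translation_subtract(2)[OF D_sets] by simp
    also have "\<dots> \<le> ennreal (e / 2 + e / 2)"
      using D_small by (intro less_imp_le add_mono_ennreal)
    finally show ?case
      by simp
  qed
qed simp

lemma fmeasurable_level_set:
  fixes f :: "'a \<Rightarrow> real"
  assumes [measurable]: "f \<in> borel_measurable M"
    and fin: "(\<integral>\<^sup>+ y. ennreal (\<bar>f y\<bar> powr p) \<partial>M) < \<infinity>" and "c \<noteq> 0"
  shows "f -` {c} \<inter> space M \<in> fmeasurable M"
proof -
  have sets: "f -` {c} \<inter> space M \<in> sets M"
    by measurable
  have "ennreal (\<bar>c\<bar> powr p) * emeasure M (f -` {c} \<inter> space M)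
      = (\<integral>\<^sup>+ y. ennreal (\<bar>c\<bar> powr p) * indicator (f -` {c} \<inter> space M) y \<partial>M)"
    using sets by (simp add: nn_integral_cmult_indicator)
  also have "\<dots> \<le> (\<integral>\<^sup>+ y. ennreal (\<bar>f y\<bar> powr p) \<partial>M)"
    by (intro nn_integral_mono) (auto simp: indicator_def)
  also have "\<dots> < \<infinity>"
    by (rule fin)
  finally show ?thesis
    using sets \<open>c \<noteq> 0\<close> by (auto simp: fmeasurable_def ennreal_mult_less_top)
qed

lemma simple_function_translation_diff_tendsto:
  fixes s :: "'a::euclidean_space \<Rightarrow> real"
  assumes p: "p > 0" and s: "simple_function lebesgue s"
    and fin: "(\<integral>\<^sup>+ y. ennreal (\<bar>s y\<bar> powr p) \<partial>lebesgue) < \<infinity>"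
  shows "((\<lambda>\<xi>. \<integral>\<^sup>+ y. ennreal (\<bar>s (y - \<xi>) - s y\<bar> powr p) \<partial>lebesgue) \<longlongrightarrow> 0) (at 0)"
proof -
  have [measurable]: "s \<in> borel_measurable lebesgue"
    using s by (rule borel_measurable_simple_function)
  define R where "R = s ` UNIV - {0}"
  have R: "finite R"
    using s by (simp add: simple_function_def R_def)
  define B where "B = (\<Sum>c\<in>R. \<bar>c\<bar>)"
  have B: "\<bar>s y\<bar> \<le> B" for y
    using R member_le_sum[of "s y" R abs] by (cases "s y = 0") (auto simp: B_def R_def sum_nonneg)
  define D where "D \<xi> c = {y. (y - \<xi> \<in> s -` {c}) \<noteq> (y \<in> s -` {c})}" for \<xi> c
  have D_sets: "D \<xi> c \<in> sets lebesgue" for \<xi> c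
  proof -
    have "Measurable.pred lebesgue (\<lambda>y. (s (y - \<xi>) = c) \<noteq> (s y = c))"
      by measurable
    then show ?thesis
      by (simp add: D_def pred_def)
  qed
  define C where "C = ennreal ((2 * B) powr p)"
  have pointwise: "ennreal (\<bar>s (y - \<xi>) - s y\<bar> powr p) \<le> C * (\<Sum>c\<in>R. indicator (D \<xi> c) y)" for y \<xi>
  proof (cases "s (y - \<xi>) = s y")
    case False
    then obtain c where c: "c \<in> R" "y \<in> D \<xi> c"
      by (cases "s y = 0") (auto simp: R_def D_def)
    have "(1::ennreal) \<le> (\<Sum>c\<in>R. indicator (D \<xi> c) y)"
      using member_le_sum[of c R "\<lambda>c. indicator (D \<xi> c) y :: ennreal"] c R by simp
    moreover have "\<bar>s (y - \<xi>) - s y\<bar> powr p \<le> (2 * B) powr p"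
      using B[of y] B[of "y - \<xi>"] p by (intro powr_mono2) auto
    ultimately show ?thesis
      using mult_mono[of "ennreal (\<bar>s (y - \<xi>) - s y\<bar> powr p)" C 1] by (simp add: C_def)
  qed simp
  have bound: "(\<integral>\<^sup>+ y. ennreal (\<bar>s (y - \<xi>) - s y\<bar> powr p) \<partial>lebesgue)
      \<le> C * (\<Sum>c\<in>R. emeasure lebesgue (D \<xi> c))" for \<xi>
  proof -
    have "(\<integral>\<^sup>+ y. ennreal (\<bar>s (y - \<xi>) - s y\<bar> powr p) \<partial>lebesgue)
        \<le> (\<integral>\<^sup>+ y. C * (\<Sum>c\<in>R. indicator (D \<xi> c) y) \<partial>lebesgue)"
      by (intro nn_integral_mono pointwise)
    also have "\<dots> = C * (\<Sum>c\<in>R. emeasure lebesgue (D \<xi> c))"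
      using D_sets by (simp add: nn_integral_cmult nn_integral_sum)
    finally show ?thesis .
  qed
  have "((\<lambda>\<xi>. emeasure lebesgue (D \<xi> c)) \<longlongrightarrow> 0) (at 0)" if "c \<in> R" for c
  proof -
    have "s -` {c} \<in> lmeasurable"
      using fmeasurable_level_set[of s lebesgue p c] fin that by (simp add: R_def)
    then show ?thesis
      unfolding D_def by (rule emeasure_translation_symdiff_tendsto)
  qed
  then have "((\<lambda>\<xi>. C * (\<Sum>c\<in>R. emeasure lebesgue (D \<xi> c))) \<longlongrightarrow> C * (\<Sum>c\<in>R. 0)) (at 0)"
    by (intro ennreal_tendsto_cmult tendsto_sum) (auto simp: C_def)
  then have lim: "((\<lambda>\<xi>. C * (\<Sum>c\<in>R. emeasure lebesgue (D \<xi> c))) \<longlongrightarrow> 0) (at 0)"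
    by simp
  show ?thesis
    by (rule tendsto_sandwich[OF _ _ tendsto_const lim]) (auto intro: always_eventually bound)
qed

lemma simple_function_approx_Lp:
  fixes g :: "'a \<Rightarrow> real"
  assumes p: "p > 0" and g[measurable]: "g \<in> borel_measurable M"
    and fin: "(\<integral>\<^sup>+ y. ennreal (\<bar>g y\<bar> powr p) \<partial>M) < \<infinity>" and e: "e > 0"
  obtains s where "simple_function M s" "(\<integral>\<^sup>+ y. ennreal (\<bar>s y\<bar> powr p) \<partial>M) < \<infinity>"
    "(\<integral>\<^sup>+ y. ennreal (\<bar>g y - s y\<bar> powr p) \<partial>M) < ennreal e"
proof -
  obtain F where F: "\<And>i. simple_function M (F i)" "\<And>x. x \<in> space M \<Longrightarrow> (\<lambda>i. F i x) \<longlonglongrightarrow> g x"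
      "\<And>i x. x \<in> space M \<Longrightarrow> \<bar>F i x\<bar> \<le> 2 * \<bar>g x\<bar>"
    using borel_measurable_implies_sequence_metric[OF g, of 0] by force
  have [measurable]: "F i \<in> borel_measurable M" for i
    using F(1) by (rule borel_measurable_simple_function)
  have powr_le: "ennreal (\<bar>u\<bar> powr p) \<le> ennreal (c powr p) * ennreal (\<bar>v\<bar> powr p)"
    if "\<bar>u\<bar> \<le> c * \<bar>v\<bar>" "c > 0" for u v c :: real
  proof -
    have "\<bar>u\<bar> powr p \<le> (c * \<bar>v\<bar>) powr p"
      using that p by (intro powr_mono2) auto
    then show ?thesis
      using that by (simp add: powr_mult ennreal_mult[symmetric])
  qed
  have "(\<lambda>i. \<integral>\<^sup>+ y. ennreal (\<bar>g y - F i y\<bar> powr p) \<partial>M) \<longlonglongrightarrow> (\<integral>\<^sup>+ y. 0 \<partial>M)"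
  proof (rule nn_integral_dominated_convergence[where w="\<lambda>y. ennreal (3 powr p) * ennreal (\<bar>g y\<bar> powr p)"])
    show "AE y in M. ennreal (\<bar>g y - F i y\<bar> powr p) \<le> ennreal (3 powr p) * ennreal (\<bar>g y\<bar> powr p)" for i
    proof (rule AE_I2)
      fix y
      assume "y \<in> space M"
      then have "\<bar>g y - F i y\<bar> \<le> 3 * \<bar>g y\<bar>"
        using F(3)[of y i] by linarith
      then show "ennreal (\<bar>g y - F i y\<bar> powr p) \<le> ennreal (3 powr p) * ennreal (\<bar>g y\<bar> powr p)"
        by (rule powr_le) simp
    qed
    show "(\<integral>\<^sup>+ y. ennreal (3 powr p) * ennreal (\<bar>g y\<bar> powr p) \<partial>M) < \<infinity>"
      using fin by (simp add: nn_integral_cmult ennreal_mult_less_top)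
    show "AE y in M. (\<lambda>i. ennreal (\<bar>g y - F i y\<bar> powr p)) \<longlonglongrightarrow> 0"
    proof (rule AE_I2)
      fix y
      assume "y \<in> space M"
      then have "(\<lambda>i. \<bar>g y - F i y\<bar>) \<longlonglongrightarrow> 0"
        using tendsto_diff[OF tendsto_const[of "g y"] F(2)[OF \<open>y \<in> space M\<close>]]
        by (simp add: tendsto_rabs_zero_iff)
      then have "(\<lambda>i. \<bar>g y - F i y\<bar> powr p) \<longlonglongrightarrow> 0"
        using p by (intro tendsto_zero_powrI) auto
      then show "(\<lambda>i. ennreal (\<bar>g y - F i y\<bar> powr p)) \<longlonglongrightarrow> 0"
        using tendsto_ennrealI by fastforce
    qed
  qed measurable
  then have "eventually (\<lambda>i. (\<integral>\<^sup>+ y. ennreal (\<bar>g y - F i y\<bar> powr p) \<partial>M) < ennreal e) sequentially"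
    using e by (intro order_tendstoD(2)) auto
  then obtain i where i: "(\<integral>\<^sup>+ y. ennreal (\<bar>g y - F i y\<bar> powr p) \<partial>M) < ennreal e"
    by (auto simp: eventually_sequentially)
  have "(\<integral>\<^sup>+ y. ennreal (\<bar>F i y\<bar> powr p) \<partial>M) \<le> (\<integral>\<^sup>+ y. ennreal (2 powr p) * ennreal (\<bar>g y\<bar> powr p) \<partial>M)"
    by (intro nn_integral_mono powr_le F(3)) auto
  also have "\<dots> < \<infinity>"
    using fin by (simp add: nn_integral_cmult ennreal_mult_less_top)
  finally show thesis
    using that F(1) i by blast
qed

lemma nn_integral_translation_diff_tendsto:
  fixes g :: "'a::euclidean_space \<Rightarrow> real"
  assumes p: "p > 0" and g[measurable]: "g \<in> borel_measurable lebesgue"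
    and fin: "(\<integral>\<^sup>+ y. ennreal (\<bar>g y\<bar> powr p) \<partial>lebesgue) < \<infinity>"
  shows "((\<lambda>\<xi>. \<integral>\<^sup>+ y. ennreal (\<bar>g (y - \<xi>) - g y\<bar> powr p) \<partial>lebesgue) \<longlongrightarrow> 0) (at 0)"
proof (rule ennreal_tendsto_zeroI[of "4 powr p * 3"])
  fix e :: real
  assume "e > 0"
  then obtain s where s: "simple_function lebesgue s" "(\<integral>\<^sup>+ y. ennreal (\<bar>s y\<bar> powr p) \<partial>lebesgue) < \<infinity>"
    and close: "(\<integral>\<^sup>+ y. ennreal (\<bar>g y - s y\<bar> powr p) \<partial>lebesgue) < ennreal e"
    using simple_function_approx_Lp[OF p g fin] by metis
  have [measurable]: "s \<in> borel_measurable lebesgue"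
    using s(1) by (rule borel_measurable_simple_function)
  have "eventually (\<lambda>\<xi>. (\<integral>\<^sup>+ y. ennreal (\<bar>s (y - \<xi>) - s y\<bar> powr p) \<partial>lebesgue) < ennreal e) (at 0)"
    using simple_function_translation_diff_tendsto[OF p s] \<open>e > 0\<close> by (intro order_tendstoD(2)) auto
  then show "eventually (\<lambda>\<xi>. (\<integral>\<^sup>+ y. ennreal (\<bar>g (y - \<xi>) - g y\<bar> powr p) \<partial>lebesgue)
      \<le> ennreal (4 powr p * 3 * e)) (at 0)"
  proof eventually_elim
    case (elim \<xi>)
    let ?I = "\<lambda>u. \<integral>\<^sup>+ y. ennreal (\<bar>u y\<bar> powr p) \<partial>lebesgue"
    have "?I (\<lambda>y. g (y - \<xi>) - g y)
        \<le> (\<integral>\<^sup>+ y. ennreal (4 powr p) * (ennreal (\<bar>g (y - \<xi>) - s (y - \<xi>)\<bar> powr p)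
            + ennreal (\<bar>s (y - \<xi>) - s y\<bar> powr p) + ennreal (\<bar>s y - g y\<bar> powr p)) \<partial>lebesgue)"
    proof (intro nn_integral_mono)
      fix y
      have "\<bar>g (y - \<xi>) - g y\<bar> powr p \<le> 4 powr p * (\<bar>g (y - \<xi>) - s (y - \<xi>)\<bar> powr p
            + \<bar>s (y - \<xi>) - s y\<bar> powr p + \<bar>s y - g y\<bar> powr p)"
        using abs_add3_powr_le[OF p, of "g (y - \<xi>) - s (y - \<xi>)" "s (y - \<xi>) - s y" "s y - g y"] by simp
      then show "ennreal (\<bar>g (y - \<xi>) - g y\<bar> powr p) \<le> ennreal (4 powr p) * (ennreal (\<bar>g (y - \<xi>) - s (y - \<xi>)\<bar> powr p)
            + ennreal (\<bar>s (y - \<xi>) - s y\<bar> powr p) + ennreal (\<bar>s y - g y\<bar> powr p))"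
        by (simp add: ennreal_mult[symmetric] ennreal_plus[symmetric] del: ennreal_plus)
    qed
    also have "\<dots> = ennreal (4 powr p) * (?I (\<lambda>y. g (y - \<xi>) - s (y - \<xi>))
        + ?I (\<lambda>y. s (y - \<xi>) - s y) + ?I (\<lambda>y. s y - g y))"
      by (simp add: nn_integral_add nn_integral_cmult)
    also have "?I (\<lambda>y. g (y - \<xi>) - s (y - \<xi>)) = ?I (\<lambda>y. g y - s y)"
      by (rule nn_integral_translation_subtract[where h="\<lambda>y. ennreal (\<bar>g y - s y\<bar> powr p)"]) measurable
    also have "?I (\<lambda>y. s y - g y) = ?I (\<lambda>y. g y - s y)"
      by (simp add: abs_minus_commute)
    also have "ennreal (4 powr p) * (?I (\<lambda>y. g y - s y) + ?I (\<lambda>y. s (y - \<xi>) - s y) + ?I (\<lambda>y. g y - s y))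
        \<le> ennreal (4 powr p) * (ennreal e + ennreal e + ennreal e)"
      using close elim by (intro mult_left_mono add_mono) auto
    also have "\<dots> = ennreal (4 powr p * 3 * e)"
      using \<open>e > 0\<close> by (simp add: ennreal_mult[symmetric] ennreal_plus[symmetric] del: ennreal_plus)
    finally show ?case .
  qed
qed simp

section \<open>Morrey estimates for differences of translates\<close>

definition morrey_modulus :: "real \<Rightarrow> real \<Rightarrow> ('a::euclidean_space \<Rightarrow> real) \<Rightarrow> real \<Rightarrow> ennreal" where
  "morrey_modulus p lam f r = (SUP x. morrey_M p lam f x r)"

definition unit_ball_tail :: "real \<Rightarrow> ('a::euclidean_space \<Rightarrow> real) \<Rightarrow> real \<Rightarrow> ennreal" where
  "unit_ball_tail p f N =
     (SUP x. \<integral>\<^sup>+ y \<in> ball x 1. ennreal (\<bar>f y\<bar> powr p) * indicator (UNIV - ball 0 N) y \<partial>lebesgue)"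

lemma morrey_M_translation_diff_le:
  fixes f :: "'a::euclidean_space \<Rightarrow> real"
  assumes p: "p > 0" and [measurable]: "f \<in> borel_measurable lebesgue"
  shows "morrey_M p lam (\<lambda>y. f (y - \<xi>) - f y) x r
     \<le> ennreal (2 powr p) * (morrey_M p lam f (x - \<xi>) r + morrey_M p lam f x r)"
proof -
  let ?F = "\<lambda>y. ennreal (\<bar>f y\<bar> powr p)"
  have "(\<integral>\<^sup>+ y \<in> ball x r. ennreal (\<bar>f (y - \<xi>) - f y\<bar> powr p) \<partial>lebesgue)
      \<le> (\<integral>\<^sup>+ y \<in> ball x r. ennreal (2 powr p) * (?F (y - \<xi>) + ?F y) \<partial>lebesgue)"
  proof (intro nn_integral_mono mult_right_mono)
    fix y
    show "ennreal (\<bar>f (y - \<xi>) - f y\<bar> powr p) \<le> ennreal (2 powr p) * (?F (y - \<xi>) + ?F y)"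
      using abs_add_powr_le[OF p, of "f (y - \<xi>)" "- f y"]
      by (simp add: ennreal_mult[symmetric] ennreal_plus[symmetric] del: ennreal_plus)
  qed simp
  also have "\<dots> = ennreal (2 powr p) * ((\<integral>\<^sup>+ y \<in> ball x r. ?F (y - \<xi>) \<partial>lebesgue)
      + (\<integral>\<^sup>+ y \<in> ball x r. ?F y \<partial>lebesgue))"
    by (simp add: distrib_left distrib_right mult.assoc nn_integral_add nn_integral_cmult)
  also have "(\<integral>\<^sup>+ y \<in> ball x r. ?F (y - \<xi>) \<partial>lebesgue) = (\<integral>\<^sup>+ y \<in> ball (x - \<xi>) r. ?F y \<partial>lebesgue)"
    by (rule nn_integral_ball_translation_subtract) measurable
  finally have "(\<integral>\<^sup>+ y \<in> ball x r. ennreal (\<bar>f (y - \<xi>) - f y\<bar> powr p) \<partial>lebesgue)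
      \<le> ennreal (2 powr p) * ((\<integral>\<^sup>+ y \<in> ball (x - \<xi>) r. ?F y \<partial>lebesgue)
        + (\<integral>\<^sup>+ y \<in> ball x r. ?F y \<partial>lebesgue))" .
  from mult_left_mono[OF this, of "ennreal (r powr - lam)"] show ?thesis
    unfolding morrey_M_def by (simp add: distrib_left mult.left_commute)
qed

lemma ball_covered_by_unit_balls:
  fixes R :: real
  obtains Z :: "'a::euclidean_space set"
  where "finite Z" "\<And>x y. y \<in> ball x R \<Longrightarrow> \<exists>z\<in>Z. y \<in> ball (x + z) 1"
proof -
  have "cball (0::'a) R \<subseteq> (\<Union>z\<in>cball 0 R. ball z 1)"
    by force
  then obtain Z where Z: "Z \<subseteq> cball 0 R" "finite Z" "cball (0::'a) R \<subseteq> (\<Union>z\<in>Z. ball z 1)"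
    by (rule compactE_image[OF compact_cball open_ball])
  show ?thesis
  proof (rule that[OF Z(2)])
    fix x y :: 'a
    assume "y \<in> ball x R"
    then have "y - x \<in> cball 0 R"
      by (simp add: dist_norm norm_minus_commute)
    then obtain z where "z \<in> Z" "y - x \<in> ball z 1"
      using Z(3) by blast
    then show "\<exists>z\<in>Z. y \<in> ball (x + z) 1"
      by (auto simp: dist_norm algebra_simps)
  qed
qed

lemma nn_integral_ball_le_card_unit_balls:
  fixes F :: "'a::euclidean_space \<Rightarrow> ennreal" and Z :: "'a set"
  assumes [measurable]: "F \<in> borel_measurable lebesgue"
    and Z: "finite Z" "\<And>x y. y \<in> ball x R \<Longrightarrow> \<exists>z\<in>Z. y \<in> ball (x + z) 1"
  shows "(\<integral>\<^sup>+ y \<in> ball x R. F y \<partial>lebesgue) \<le> of_nat (card Z) * (SUP x. \<integral>\<^sup>+ y \<in> ball x 1. F y \<partial>lebesgue)"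
proof -
  have "indicator (ball x R) y \<le> (\<Sum>z\<in>Z. indicator (ball (x + z) 1) y :: ennreal)" for y
  proof (cases "y \<in> ball x R")
    case True
    then obtain z where "z \<in> Z" "y \<in> ball (x + z) 1"
      using Z(2) by blast
    then show ?thesis
      using True member_le_sum[where i=z and A=Z and f="\<lambda>z. indicator (ball (x + z) 1) y :: ennreal"] Z(1) by simp
  qed simp
  then have "(\<integral>\<^sup>+ y \<in> ball x R. F y \<partial>lebesgue) \<le> (\<integral>\<^sup>+ y. (\<Sum>z\<in>Z. F y * indicator (ball (x + z) 1) y) \<partial>lebesgue)"
    by (intro nn_integral_mono) (simp add: mult_left_mono flip: sum_distrib_left)
  also have "\<dots> = (\<Sum>z\<in>Z. \<integral>\<^sup>+ y \<in> ball (x + z) 1. F y \<partial>lebesgue)"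
    by (rule nn_integral_sum) measurable
  also have "\<dots> \<le> (\<Sum>z\<in>Z. SUP x. \<integral>\<^sup>+ y \<in> ball x 1. F y \<partial>lebesgue)"
    by (intro sum_mono SUP_upper) simp
  finally show ?thesis
    by simp
qed

lemma nn_integral_ball_translation_diff_le:
  fixes f :: "'a::euclidean_space \<Rightarrow> real" and Z :: "'a set" and N :: real
  assumes p: "p > 0" and [measurable]: "f \<in> borel_measurable lebesgue" and \<xi>: "norm \<xi> < 1"
    and Z: "finite Z" "\<And>x y. y \<in> ball x R \<Longrightarrow> \<exists>z\<in>Z. y \<in> ball (x + z) 1"
  defines "g \<equiv> \<lambda>y. f y * indicator (ball 0 (N + 2)) y"
  shows "(\<integral>\<^sup>+ y \<in> ball x R. ennreal (\<bar>f (y - \<xi>) - f y\<bar> powr p) \<partial>lebesgue)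
    \<le> (\<integral>\<^sup>+ y. ennreal (\<bar>g (y - \<xi>) - g y\<bar> powr p) \<partial>lebesgue)
      + ennreal (2 powr p) * 2 * of_nat (card Z) * unit_ball_tail p f N"
proof -
  define F where "F y = ennreal (\<bar>f y\<bar> powr p) * indicator (UNIV - ball 0 N) y" for y
  have [measurable]: "F \<in> borel_measurable lebesgue" "g \<in> borel_measurable lebesgue"
    unfolding F_def g_def by measurable
  let ?K = "ennreal (2 powr p)"
  have pointwise: "ennreal (\<bar>f (y - \<xi>) - f y\<bar> powr p) * indicator (ball x R) y
      \<le> ennreal (\<bar>g (y - \<xi>) - g y\<bar> powr p) + ?K * (F (y - \<xi>) * indicator (ball x R) y + F y * indicator (ball x R) y)"
    for y
  proof (cases "norm y < N + 1")
    case True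
    then have "norm (y - \<xi>) < N + 2"
      using norm_triangle_ineq4[of y \<xi>] \<xi> by linarith
    with True have "g (y - \<xi>) = f (y - \<xi>)" "g y = f y"
      by (simp_all add: g_def)
    then show ?thesis
      by (simp add: indicator_def add_increasing2)
  next
    case False
    then have "norm (y - \<xi>) \<ge> N"
      using norm_triangle_ineq2[of y \<xi>] \<xi> by linarith
    with False have "F (y - \<xi>) = ennreal (\<bar>f (y - \<xi>)\<bar> powr p)" "F y = ennreal (\<bar>f y\<bar> powr p)"
      by (simp_all add: F_def)
    moreover have "ennreal (\<bar>f (y - \<xi>) - f y\<bar> powr p) \<le> ?K * (ennreal (\<bar>f (y - \<xi>)\<bar> powr p) + ennreal (\<bar>f y\<bar> powr p))"
      using abs_add_powr_le[OF p, of "f (y - \<xi>)" "- f y"]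
      by (simp add: ennreal_mult[symmetric] ennreal_plus[symmetric] del: ennreal_plus)
    ultimately show ?thesis
      by (simp add: indicator_def add_increasing)
  qed
  have tail: "(\<integral>\<^sup>+ y \<in> ball x' R. F y \<partial>lebesgue) \<le> of_nat (card Z) * unit_ball_tail p f N" for x'
    unfolding unit_ball_tail_def
    using nn_integral_ball_le_card_unit_balls[of F Z R x'] Z by (simp add: F_def mult.assoc)
  have "(\<integral>\<^sup>+ y \<in> ball x R. ennreal (\<bar>f (y - \<xi>) - f y\<bar> powr p) \<partial>lebesgue)
      \<le> (\<integral>\<^sup>+ y. ennreal (\<bar>g (y - \<xi>) - g y\<bar> powr p)
          + ?K * (F (y - \<xi>) * indicator (ball x R) y + F y * indicator (ball x R) y) \<partial>lebesgue)"
    by (intro nn_integral_mono pointwise)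
  also have "\<dots> = (\<integral>\<^sup>+ y. ennreal (\<bar>g (y - \<xi>) - g y\<bar> powr p) \<partial>lebesgue)
        + ?K * ((\<integral>\<^sup>+ y \<in> ball x R. F (y - \<xi>) \<partial>lebesgue) + (\<integral>\<^sup>+ y \<in> ball x R. F y \<partial>lebesgue))"
    by (simp add: nn_integral_add nn_integral_cmult)
  also have "(\<integral>\<^sup>+ y \<in> ball x R. F (y - \<xi>) \<partial>lebesgue) = (\<integral>\<^sup>+ y \<in> ball (x - \<xi>) R. F y \<partial>lebesgue)"
    by (rule nn_integral_ball_translation_subtract) measurable
  also have "\<dots> + (\<integral>\<^sup>+ y \<in> ball x R. F y \<partial>lebesgue) \<le> 2 * of_nat (card Z) * unit_ball_tail p f N"
    using add_mono[OF tail tail] by (simp add: mult_2 distrib_right)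
  finally show ?thesis
    by (simp add: mult_left_mono add_left_mono mult.assoc)
qed

lemma morrey_normp_translation_diff_le:
  fixes f :: "'a::euclidean_space \<Rightarrow> real" and Z :: "'a set" and N :: real
  assumes p: "p > 0" and lam: "lam \<ge> 0" and f: "f \<in> borel_measurable lebesgue"
    and \<delta>: "\<delta> > 0" and \<xi>: "norm \<xi> < 1"
    and Z: "finite Z" "\<And>x y. y \<in> ball x R \<Longrightarrow> \<exists>z\<in>Z. y \<in> ball (x + z) 1"
    and small_large: "\<And>r. 0 < r \<Longrightarrow> r < \<delta> \<or> R \<le> r \<Longrightarrow> ennreal (2 powr p) * 2 * morrey_modulus p lam f r \<le> e"
  defines "g \<equiv> \<lambda>y. f y * indicator (ball 0 (N + 2)) y"
  shows "morrey_normp p lam (\<lambda>y. f (y - \<xi>) - f y)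
    \<le> max e (ennreal (\<delta> powr - lam) * ((\<integral>\<^sup>+ y. ennreal (\<bar>g (y - \<xi>) - g y\<bar> powr p) \<partial>lebesgue)
      + ennreal (2 powr p) * 2 * of_nat (card Z) * unit_ball_tail p f N))"
    (is "_ \<le> max e ?middle")
  unfolding morrey_normp_def
proof (intro SUP_least)
  fix x :: 'a and r :: real
  assume "r \<in> {0<..}"
  then have r: "r > 0"
    by simp
  show "morrey_M p lam (\<lambda>y. f (y - \<xi>) - f y) x r \<le> max e ?middle"
  proof (cases "r < \<delta> \<or> R \<le> r")
    case True
    have le_modulus: "morrey_M p lam f x' r \<le> morrey_modulus p lam f r" for x'
      unfolding morrey_modulus_def by (rule SUP_upper) simp
    have "morrey_M p lam f (x - \<xi>) r + morrey_M p lam f x r \<le> 2 * morrey_modulus p lam f r"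
      using add_mono[OF le_modulus le_modulus] by (simp add: mult_2)
    then have "morrey_M p lam (\<lambda>y. f (y - \<xi>) - f y) x r \<le> ennreal (2 powr p) * (2 * morrey_modulus p lam f r)"
      using morrey_M_translation_diff_le[OF p f, of lam \<xi> x r] by (meson mult_left_mono order_trans zero_le)
    also have "\<dots> \<le> e"
      using small_large[OF r True] by (simp add: mult.assoc)
    finally show ?thesis
      by (rule max.coboundedI1)
  next
    case False
    have "r powr - lam \<le> \<delta> powr - lam"
      using False lam \<delta> by (intro powr_mono2') auto
    moreover have "(\<integral>\<^sup>+ y \<in> ball x r. ennreal (\<bar>f (y - \<xi>) - f y\<bar> powr p) \<partial>lebesgue)
        \<le> (\<integral>\<^sup>+ y \<in> ball x R. ennreal (\<bar>f (y - \<xi>) - f y\<bar> powr p) \<partial>lebesgue)"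
      using False by (intro nn_integral_mono mult_left_mono) (auto simp: indicator_def)
    ultimately have "morrey_M p lam (\<lambda>y. f (y - \<xi>) - f y) x r \<le> ?middle"
      unfolding morrey_M_def g_def
      using nn_integral_ball_translation_diff_le[OF p f \<xi> Z, where x=x and N=N]
      by (intro mult_mono) (auto intro: order_trans)
    then show ?thesis
      by (rule max.coboundedI2)
  qed
qed

lemma morrey_normp_translation_diff_tendsto:
  fixes f :: "'a::euclidean_space \<Rightarrow> real"
  assumes p: "p > 0" and lam: "lam \<ge> 0" and f: "f \<in> borel_measurable lebesgue"
    and locally_integrable: "\<And>K. compact K \<Longrightarrow> (\<integral>\<^sup>+ y \<in> K. ennreal (\<bar>f y\<bar> powr p) \<partial>lebesgue) < \<infinity>"
    and modulus_0: "(morrey_modulus p lam f \<longlongrightarrow> 0) (at_right 0)"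
    and modulus_inf: "(morrey_modulus p lam f \<longlongrightarrow> 0) at_top"
    and tail: "(unit_ball_tail p f \<longlongrightarrow> 0) at_top"
  shows "((\<lambda>\<xi>. morrey_normp p lam (\<lambda>y. f (y - \<xi>) - f y)) \<longlongrightarrow> 0) (at 0)"
proof (rule ennreal_tendsto_zeroI[of 2])
  fix e :: real
  assume "e > 0"
  have small: "eventually (\<lambda>x. c * u x < ennreal e) F"
    if "c < top" "(u \<longlongrightarrow> 0) F" for c :: ennreal and u :: "'b \<Rightarrow> ennreal" and F
    using ennreal_tendsto_cmult[OF that] \<open>e > 0\<close> by (intro order_tendstoD(2)) auto
  let ?K = "ennreal (2 powr p)"
  obtain \<delta> where \<delta>: "\<delta> > 0" "\<And>r. 0 < r \<Longrightarrow> r < \<delta> \<Longrightarrow> ?K * 2 * morrey_modulus p lam f r < ennreal e"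
    using small[OF _ modulus_0, of "?K * 2"] by (auto simp: eventually_at_right_field ennreal_mult_less_top)
  obtain R where R: "\<And>r. R \<le> r \<Longrightarrow> ?K * 2 * morrey_modulus p lam f r < ennreal e"
    using small[OF _ modulus_inf, of "?K * 2"] by (auto simp: eventually_at_top_linorder ennreal_mult_less_top)
  have small_large: "?K * 2 * morrey_modulus p lam f r \<le> ennreal e" if "0 < r" "r < \<delta> \<or> R \<le> r" for r
    using \<delta>(2) R that by (meson less_imp_le)
  obtain Z :: "'a set" where Z: "finite Z" "\<And>x y. y \<in> ball x R \<Longrightarrow> \<exists>z\<in>Z. y \<in> ball (x + z) 1"
    using ball_covered_by_unit_balls[of R] by blast
  let ?D = "ennreal (\<delta> powr - lam)"
  obtain N where N: "?D * (?K * 2 * of_nat (card Z)) * unit_ball_tail p f N < ennreal e"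
    using small[OF _ tail, of "?D * (?K * 2 * of_nat (card Z))"]
    by (auto simp: eventually_at_top_linorder ennreal_mult_less_top of_nat_less_top)
  define g where "g y = f y * indicator (ball 0 (N + 2)) y" for y
  have [measurable]: "g \<in> borel_measurable lebesgue"
    unfolding g_def using f by measurable
  have "(\<integral>\<^sup>+ y. ennreal (\<bar>g y\<bar> powr p) \<partial>lebesgue) \<le> (\<integral>\<^sup>+ y \<in> cball 0 (N + 2). ennreal (\<bar>f y\<bar> powr p) \<partial>lebesgue)"
    by (intro nn_integral_mono) (auto simp: g_def indicator_def)
  also have "\<dots> < \<infinity>"
    by (rule locally_integrable) simp
  finally have "eventually (\<lambda>\<xi>. ?D * (\<integral>\<^sup>+ y. ennreal (\<bar>g (y - \<xi>) - g y\<bar> powr p) \<partial>lebesgue) < ennreal e) (at 0)"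
    by (intro small nn_integral_translation_diff_tendsto p) auto
  with eventually_at_zero_norm_less[OF zero_less_one]
  show "eventually (\<lambda>\<xi>. morrey_normp p lam (\<lambda>y. f (y - \<xi>) - f y) \<le> ennreal (2 * e)) (at 0)"
  proof eventually_elim
    case (elim \<xi>)
    have "morrey_normp p lam (\<lambda>y. f (y - \<xi>) - f y)
        \<le> max (ennreal e) (?D * ((\<integral>\<^sup>+ y. ennreal (\<bar>g (y - \<xi>) - g y\<bar> powr p) \<partial>lebesgue)
          + ?K * 2 * of_nat (card Z) * unit_ball_tail p f N))"
      unfolding g_def by (rule morrey_normp_translation_diff_le[OF p lam f \<delta>(1) elim(1) Z small_large])
    also have "\<dots> \<le> max (ennreal e) (ennreal e + ennreal e)"
      using elim(2) N by (auto simp: distrib_left mult.assoc intro!: add_mono max.mono)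
    also have "\<dots> = ennreal (2 * e)"
      using \<open>e > 0\<close> by (simp add: max_def flip: ennreal_plus)
    finally show ?case .
  qed
qed simp

theorem theorem4p3:
  fixes p lam :: real
  assumes "0 \<le> lam" and "lam < real DIM('a::euclidean_space)" and "1 \<le> p"
  shows "(V0inf_star_morrey p lam :: ('a \<Rightarrow> real) set) \<subseteq> zorko_morrey p lam"
proof
  fix f :: "'a \<Rightarrow> real"
  assume "f \<in> V0inf_star_morrey p lam"
  then have f: "f \<in> morrey_space p lam"
    and "(morrey_modulus p lam f \<longlongrightarrow> 0) (at_right 0)" "(morrey_modulus p lam f \<longlongrightarrow> 0) at_top"
    and "(unit_ball_tail p f \<longlongrightarrow> 0) at_top"
    unfolding V0inf_star_morrey_def V0_morrey_def Vinf_morrey_def Vstar_morrey_def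
      morrey_modulus_def unit_ball_tail_def
    by auto
  moreover have "p > 0"
    using assms(3) by simp
  ultimately have "((\<lambda>\<xi>. morrey_normp p lam (\<lambda>y. f (y - \<xi>) - f y)) \<longlongrightarrow> 0) (at 0)"
    using morrey_normp_translation_diff_tendsto[OF _ assms(1)] by (auto simp: morrey_space_def)
  with f show "f \<in> zorko_morrey p lam"
    by (simp add: zorko_morrey_def)
qed

end
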